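(* Let $S,Y,Y^*$ be independent random variables. Suppose $S\ge0$ has a distribution with right endpoint equal to $1$. Suppose that $Y$ has a rapidly varying tail, i.e. $\mathbb{P}(Y>u)>0$ for all $u$ and $\lim_{u\to\infty}\mathbb{P}(Y>\lambda u)/\mathbb{P}(Y>u)=0$ for every $\lambda>1$, and that $\mathbb{P}(Y>u)\sim L(u)\mathbb{P}(Y^*>u)$ as $u\to\infty$ for some function $L(\cdot)$ slowly varying at infinity. Then for every $w\in(0,1)$, $$\mathbb{P}(SY>u)\sim\mathbb{P}(SY>u,\,S>w)\sim L(u)\,\mathbb{P}(SY^*>u),\qquad u\to\infty.$$
   Context: $f_1(u)\sim f_2(u)$ means $\lim_{u\to\infty}f_1(u)/f_2(u)=1$. A function $L$ is slowly varying at infinity if $\lim_{u\to\infty}L(ux)/L(u)=1$ for all $x>0$. *)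

theory Defs
  imports "HOL-Probability.Probability" "HOL-Library.Landau_Symbols"
begin

definition slowly_varying :: "(real \<Rightarrow> real) \<Rightarrow> bool" where
  "slowly_varying L \<longleftrightarrow> (\<forall>x>0. ((\<lambda>u. L (u * x) / L u) \<longlongrightarrow> 1) at_top)"

definition right_endpoint :: "'a measure \<Rightarrow> ('a \<Rightarrow> real) \<Rightarrow> ereal" where
  "right_endpoint M X = (SUP x\<in>{x. measure M {\<omega>\<in>space M. X \<omega> \<le> x} < 1}. ereal x)"

definition rapidly_varying_tail :: "'a measure \<Rightarrow> ('a \<Rightarrow> real) \<Rightarrow> bool" where
  "rapidly_varying_tail M Y \<longleftrightarrow>
     (\<forall>u. measure M {\<omega>\<in>space M. Y \<omega> > u} > 0) \<and>
     (\<forall>c>1. ((\<lambda>u. measure M {\<omega>\<in>space M. Y \<omega> > c * u} / measure M {\<omega>\<in>space M. Y \<omega> > u})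
                 \<longlongrightarrow> 0) at_top)"

end

theory Submission
  imports Defs
begin

text \<open>By independence, \<open>P(SY > u, S > w)\<close> is the integral of \<open>P(Y > u/s)\<close> over \<open>s \<in> (w, 1]\<close>
  against the law of \<open>S\<close>. The part \<open>S \<le> w\<close> of \<open>P(SY > u)\<close> is at most \<open>P(Y > u/w)\<close>, which by
  rapid variation is \<open>o(P(Y > u/v))\<close> for \<open>w < v < 1\<close>, whereas
  \<open>P(SY > u, S > w) \<ge> P(S > v) P(Y > u/v)\<close> with \<open>P(S > v) > 0\<close> since \<open>1\<close> is the right endpoint
  of \<open>S\<close>. This gives the first equivalence, for \<open>Y\<close> and equally for \<open>Y\<^sup>*\<close>, whose tail is rapidly
  varying too. Writing \<open>P(Y > t) = g(t) P(Y\<^sup>* > t)\<close>, the ratio \<open>g \<sim> L\<close> is slowly varying and,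
  unlike \<open>L\<close>, measurable, so by the uniform convergence theorem \<open>g(u/s) \<sim> g(u)\<close> uniformly in
  \<open>s \<in> [w, 1]\<close>; integrating, \<open>P(SY > u, S > w) \<sim> g(u) P(SY\<^sup>* > u, S > w) \<sim> L(u) P(SY\<^sup>* > u)\<close>.\<close>

section \<open>Independence and conditioning on the first coordinate\<close>

lemma (in prob_space) indep_var_from_indep_vars:
  assumes "indep_vars N X I" "i \<in> I" "j \<in> I" "i \<noteq> j"
  shows "indep_var (N i) (X i) (N j) (X j)"
proof -
  have "indep_var (N i) ((\<lambda>f. f i) \<circ> (\<lambda>\<omega>. restrict (\<lambda>i. X i \<omega>) {i}))
      (N j) ((\<lambda>f. f j) \<circ> (\<lambda>\<omega>. restrict (\<lambda>i. X i \<omega>) {j}))"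
    using assms by (intro indep_var_compose[OF indep_var_restrict[OF assms(1)]]) auto
  then show ?thesis by (simp add: comp_def)
qed

lemma (in prob_space) emeasure_indep_pair_eq_nn_integral_sections:
  assumes ind: "indep_var N S N' Z" and C: "C \<in> sets (N \<Otimes>\<^sub>M N')"
  shows "emeasure M {\<omega>\<in>space M. (S \<omega>, Z \<omega>) \<in> C}
       = (\<integral>\<^sup>+s. emeasure (distr M N' Z) (Pair s -` C) \<partial>distr M N S)"
proof -
  have rS: "random_variable N S" and rZ: "random_variable N' Z"
    using ind by (blast dest: indep_var_rv1 indep_var_rv2)+
  interpret DZ: prob_space "distr M N' Z" by (rule prob_space_distr) fact
  have C': "C \<in> sets (distr M N S \<Otimes>\<^sub>M distr M N' Z)"
    using C by (metis sets_distr sets_pair_measure_cong)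
  have "emeasure M {\<omega>\<in>space M. (S \<omega>, Z \<omega>) \<in> C} = emeasure (distr M (N \<Otimes>\<^sub>M N') (\<lambda>\<omega>. (S \<omega>, Z \<omega>))) C"
    using C rS rZ by (subst emeasure_distr) (auto intro!: arg_cong[where f="emeasure M"] measurable_Pair)
  also have "\<dots> = emeasure (distr M N S \<Otimes>\<^sub>M distr M N' Z) C"
    using ind by (simp add: indep_var_distribution_eq)
  also have "\<dots> = (\<integral>\<^sup>+s. emeasure (distr M N' Z) (Pair s -` C) \<partial>distr M N S)"
    by (rule DZ.emeasure_pair_measure_alt[OF C'])
  finally show ?thesis .
qed

lemma (in prob_space) prob_indep_pair_le_by_sections:
  assumes ind: "indep_var N S N' Z" and ind': "indep_var N S N' Z'"
    and C: "C \<in> sets (N \<Otimes>\<^sub>M N')" and K: "K \<ge> 0"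
    and sections: "\<And>s. prob {\<omega>\<in>space M. Z \<omega> \<in> Pair s -` C} \<le> K * prob {\<omega>\<in>space M. Z' \<omega> \<in> Pair s -` C}"
  shows "prob {\<omega>\<in>space M. (S \<omega>, Z \<omega>) \<in> C} \<le> K * prob {\<omega>\<in>space M. (S \<omega>, Z' \<omega>) \<in> C}"
proof -
  have rZ: "random_variable N' Z" and rZ': "random_variable N' Z'"
    using ind ind' by (blast dest: indep_var_rv2)+
  have section_eq: "emeasure (distr M N' X) (Pair s -` C) = prob {\<omega>\<in>space M. X \<omega> \<in> Pair s -` C}"
    if "random_variable N' X" for X s
    using that sets_Pair1[OF C, of s]
    by (subst emeasure_distr) (auto simp: emeasure_eq_measure vimage_def Int_def conj_commute)
  interpret DZ': prob_space "distr M N' Z'" by (rule prob_space_distr) fact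
  have C': "C \<in> sets (distr M N S \<Otimes>\<^sub>M distr M N' Z')"
    using C by (metis sets_distr sets_pair_measure_cong)
  have "emeasure M {\<omega>\<in>space M. (S \<omega>, Z \<omega>) \<in> C}
      = (\<integral>\<^sup>+s. emeasure (distr M N' Z) (Pair s -` C) \<partial>distr M N S)"
    by (rule emeasure_indep_pair_eq_nn_integral_sections[OF ind C])
  also have "\<dots> \<le> (\<integral>\<^sup>+s. ennreal K * emeasure (distr M N' Z') (Pair s -` C) \<partial>distr M N S)"
    using sections K by (intro nn_integral_mono) (simp add: section_eq rZ rZ' ennreal_mult[symmetric])
  also have "\<dots> = ennreal K * (\<integral>\<^sup>+s. emeasure (distr M N' Z') (Pair s -` C) \<partial>distr M N S)"
    by (rule nn_integral_cmult) (rule DZ'.measurable_emeasure_Pair[OF C'])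
  also have "\<dots> = ennreal K * emeasure M {\<omega>\<in>space M. (S \<omega>, Z' \<omega>) \<in> C}"
    by (simp add: emeasure_indep_pair_eq_nn_integral_sections[OF ind' C])
  finally show ?thesis using K by (simp add: emeasure_eq_measure ennreal_mult[symmetric])
qed

section \<open>Tails and the right endpoint\<close>

lemma (in prob_space) borel_measurable_tail:
  fixes X :: "'a \<Rightarrow> real"
  assumes [measurable]: "X \<in> borel_measurable M"
  shows "(\<lambda>t. prob {\<omega>\<in>space M. X \<omega> > t}) \<in> borel_measurable borel"
proof -
  have "mono (\<lambda>t. - prob {\<omega>\<in>space M. X \<omega> > t})"
    by (auto simp: mono_def intro!: finite_measure_mono)
  from borel_measurable_uminus[OF borel_measurable_mono[OF this]] show ?thesis by simp
qed

lemma (in prob_space) prob_gt_pos_below_right_endpoint: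
  assumes [measurable]: "X \<in> borel_measurable M" and x: "ereal x < right_endpoint M X"
  shows "prob {\<omega>\<in>space M. X \<omega> > x} > 0"
proof (rule ccontr)
  assume "\<not> ?thesis"
  then have null: "prob {\<omega>\<in>space M. X \<omega> > x} = 0"
    using measure_nonneg[of M] by (meson antisym not_less)
  have one: "prob {\<omega>\<in>space M. X \<omega> \<le> y} = 1" if "x \<le> y" for y
  proof -
    have "prob {\<omega>\<in>space M. X \<omega> > y} \<le> prob {\<omega>\<in>space M. X \<omega> > x}"
      using that by (intro finite_measure_mono) auto
    then have "prob {\<omega>\<in>space M. X \<omega> > y} = 0" using null by (simp add: measure_le_0_iff)
    moreover have "{\<omega>\<in>space M. X \<omega> \<le> y} = space M - {\<omega>\<in>space M. X \<omega> > y}" by auto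
    ultimately show ?thesis by (simp add: prob_compl)
  qed
  have "right_endpoint M X \<le> ereal x"
    unfolding right_endpoint_def
  proof (intro SUP_least)
    fix y assume "y \<in> {y. prob {\<omega>\<in>space M. X \<omega> \<le> y} < 1}"
    with one show "ereal y \<le> ereal x" by (cases "x \<le> y") auto
  qed
  with x show False by simp
qed

lemma (in prob_space) AE_le_right_endpoint:
  assumes [measurable]: "X \<in> borel_measurable M" and a: "right_endpoint M X \<le> ereal a"
  shows "AE \<omega> in M. X \<omega> \<le> a"
proof -
  have null: "emeasure M {\<omega>\<in>space M. X \<omega> > y} = 0" if "y > a" for y
  proof -
    have "prob {\<omega>\<in>space M. X \<omega> \<le> y} = 1"
    proof (rule antisym[OF prob_le_1 ccontr], unfold not_le)
      assume "prob {\<omega>\<in>space M. X \<omega> \<le> y} < 1"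
      then have "ereal y \<le> right_endpoint M X"
        unfolding right_endpoint_def by (intro SUP_upper) simp
      then have "ereal y \<le> ereal a" using a by (rule order_trans)
      with \<open>y > a\<close> show False by simp
    qed
    moreover have "{\<omega>\<in>space M. X \<omega> > y} = space M - {\<omega>\<in>space M. X \<omega> \<le> y}" by auto
    ultimately show ?thesis by (simp add: emeasure_eq_measure prob_compl)
  qed
  have "{\<omega>\<in>space M. X \<omega> > a} = (\<Union>n. {\<omega>\<in>space M. X \<omega> > a + inverse (real (Suc n))})"
  proof (intro equalityI subsetI)
    fix \<omega> assume \<omega>: "\<omega> \<in> {\<omega>\<in>space M. X \<omega> > a}"
    then obtain n where "inverse (real (Suc n)) < X \<omega> - a"
      using reals_Archimedean[of "X \<omega> - a"] by auto
    with \<omega> show "\<omega> \<in> (\<Union>n. {\<omega>\<in>space M. X \<omega> > a + inverse (real (Suc n))})"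
      by (auto simp: algebra_simps)
  next
    fix \<omega> assume "\<omega> \<in> (\<Union>n. {\<omega>\<in>space M. X \<omega> > a + inverse (real (Suc n))})"
    then obtain n where "\<omega> \<in> space M" "X \<omega> > a + inverse (real (Suc n))" by auto
    moreover have "inverse (real (Suc n)) > 0" by simp
    ultimately show "\<omega> \<in> {\<omega>\<in>space M. X \<omega> > a}" by (smt (verit) mem_Collect_eq)
  qed
  also have "emeasure M \<dots> = 0"
    by (intro emeasure_UN_eq_0 null) auto
  finally show ?thesis
    by (subst AE_iff_measurable[where N="{\<omega>\<in>space M. X \<omega> > a}"]) (auto simp: not_le)
qed

section \<open>Slow and rapid variation\<close>

lemma filterlim_mult_const_at_top: "c > 0 \<Longrightarrow> filterlim (\<lambda>u::real. u * c) at_top at_top"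
  by (rule filterlim_at_top_mult_tendsto_pos[OF tendsto_const _ filterlim_ident])

lemma asymp_equiv_relative_bounds:
  fixes f g :: "'a \<Rightarrow> real"
  assumes "\<And>\<epsilon>. 0 < \<epsilon> \<Longrightarrow> \<epsilon> < 1 \<Longrightarrow> eventually (\<lambda>x. (1 - \<epsilon>) * g x \<le> f x \<and> f x \<le> (1 + \<epsilon>) * g x) F"
  shows "f \<sim>[F] g"
  unfolding asymp_equiv_altdef
proof (rule landau_o.smallI)
  fix c :: real assume c: "c > 0"
  define \<epsilon> where "\<epsilon> = min c (1/2)"
  have \<epsilon>: "0 < \<epsilon>" "\<epsilon> < 1" "\<epsilon> \<le> c" using c by (auto simp: \<epsilon>_def)
  then have "eventually (\<lambda>x. (1 - \<epsilon>) * g x \<le> f x \<and> f x \<le> (1 + \<epsilon>) * g x) F"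
    by (intro assms)
  then show "eventually (\<lambda>x. norm (f x - g x) \<le> c * norm (g x)) F"
  proof eventually_elim
    case (elim x)
    then have "f x - g x \<le> \<epsilon> * g x" "g x - f x \<le> \<epsilon> * g x"
      by (simp_all add: algebra_simps)
    moreover have "\<epsilon> * g x \<le> \<epsilon> * \<bar>g x\<bar>"
      using \<epsilon> by (intro mult_left_mono) auto
    moreover have "\<dots> \<le> c * \<bar>g x\<bar>"
      using \<epsilon> by (intro mult_right_mono) auto
    ultimately show ?case by simp
  qed
qed

lemma slowly_varying_eventually_nonzero:
  assumes "slowly_varying L"
  shows "eventually (\<lambda>u. L u \<noteq> 0) at_top"
proof -
  have "((\<lambda>u. L u / L u) \<longlongrightarrow> 1) at_top"
    using assms by (auto simp: slowly_varying_def dest: spec[of _ 1])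
  then have "eventually (\<lambda>u. L u / L u > 0) at_top"
    by (rule order_tendstoD) simp
  then show ?thesis by eventually_elim auto
qed

lemma slowly_varying_asymp_equiv:
  fixes f L :: "real \<Rightarrow> real"
  assumes L: "slowly_varying L" and fL: "f \<sim>[at_top] L"
  shows "slowly_varying f"
  unfolding slowly_varying_def
proof (intro allI impI)
  fix x :: real assume x: "x > 0"
  have "(\<lambda>u. f (u * x) / f u) \<sim>[at_top] (\<lambda>u. L (u * x) / L u)"
    by (intro asymp_equiv_divide asymp_equiv_compose'[OF fL] fL filterlim_mult_const_at_top x)
  also have "\<dots> \<sim>[at_top] (\<lambda>_. 1)"
    using L x by (intro tendsto_imp_asymp_equiv_const) (auto simp: slowly_varying_def)
  finally show "((\<lambda>u. f (u * x) / f u) \<longlongrightarrow> 1) at_top"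
    by (rule asymp_equivD_const)
qed

lemma ratio_tendsto_zero_asymp_equiv_slowly_varying:
  fixes A B L :: "real \<Rightarrow> real"
  assumes L: "slowly_varying L" and AB: "A \<sim>[at_top] (\<lambda>u. L u * B u)" and c: "c > 0"
    and A: "((\<lambda>u. A (c * u) / A u) \<longlongrightarrow> 0) at_top"
  shows "((\<lambda>u. B (c * u) / B u) \<longlongrightarrow> 0) at_top"
proof -
  have "(\<lambda>u. A (u * c) / A u) \<sim>[at_top] (\<lambda>u. L (u * c) * B (u * c) / (L u * B u))"
    by (intro asymp_equiv_divide asymp_equiv_compose'[OF AB] AB filterlim_mult_const_at_top c)
  moreover have "((\<lambda>u. A (u * c) / A u) \<longlongrightarrow> 0) at_top"
    using A by (simp add: mult.commute)
  ultimately have LB: "((\<lambda>u. L (u * c) * B (u * c) / (L u * B u)) \<longlongrightarrow> 0) at_top"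
    by (rule asymp_equiv_tendsto_transfer)
  have "((\<lambda>u. inverse (L (u * c) / L u)) \<longlongrightarrow> inverse 1) at_top"
    using L c by (intro tendsto_inverse) (auto simp: slowly_varying_def)
  then have "((\<lambda>u. L (u * c) * B (u * c) / (L u * B u) * (L u / L (u * c))) \<longlongrightarrow> 0 * 1) at_top"
    by (intro tendsto_mult LB) simp
  moreover have "eventually (\<lambda>u. L (u * c) * B (u * c) / (L u * B u) * (L u / L (u * c)) = B (c * u) / B u) at_top"
    using slowly_varying_eventually_nonzero[OF L]
      eventually_compose_filterlim[OF slowly_varying_eventually_nonzero[OF L] filterlim_mult_const_at_top[OF c]]
    by eventually_elim (simp add: field_simps mult.commute)
  ultimately show ?thesis by (simp add: tendsto_cong)
qed

lemma (in prob_space) rapidly_varying_tail_asymp_equiv: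
  assumes [measurable]: "Z \<in> borel_measurable M"
    and Y: "rapidly_varying_tail M Y" and L: "slowly_varying L"
    and YZ: "(\<lambda>u. prob {\<omega>\<in>space M. Y \<omega> > u}) \<sim>[at_top] (\<lambda>u. L u * prob {\<omega>\<in>space M. Z \<omega> > u})"
  shows "rapidly_varying_tail M Z"
  unfolding rapidly_varying_tail_def
proof (intro conjI allI impI)
  fix t
  have Ypos: "prob {\<omega>\<in>space M. Y \<omega> > u} \<noteq> 0" for u
    using Y by (simp add: rapidly_varying_tail_def less_imp_neq[symmetric])
  have "eventually (\<lambda>u. L u * prob {\<omega>\<in>space M. Z \<omega> > u} \<noteq> 0) at_top"
    using asymp_equiv_eventually_zeros[OF YZ] by eventually_elim (use Ypos in blast)
  then obtain u where u: "u \<ge> t" "prob {\<omega>\<in>space M. Z \<omega> > u} \<noteq> 0"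
    by (auto simp: eventually_at_top_linorder) (metis max.cobounded1 max.cobounded2)
  have "prob {\<omega>\<in>space M. Z \<omega> > u} \<le> prob {\<omega>\<in>space M. Z \<omega> > t}"
    using u by (intro finite_measure_mono) auto
  with u measure_nonneg[of M "{\<omega>\<in>space M. Z \<omega> > u}"]
  show "prob {\<omega>\<in>space M. Z \<omega> > t} > 0" by linarith
next
  fix c :: real assume "c > 1"
  with Y show "((\<lambda>u. prob {\<omega>\<in>space M. Z \<omega> > c * u} / prob {\<omega>\<in>space M. Z \<omega> > u}) \<longlongrightarrow> 0) at_top"
    by (intro ratio_tendsto_zero_asymp_equiv_slowly_varying[OF L YZ]) (auto simp: rapidly_varying_tail_def)
qed

lemma (in prob_space) rapidly_varying_tail_smallo:
  assumes Z: "rapidly_varying_tail M Z" and w: "0 < w" "w < v"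
  shows "(\<lambda>u. prob {\<omega>\<in>space M. Z \<omega> > u / w}) \<in> o[at_top](\<lambda>u. prob {\<omega>\<in>space M. Z \<omega> > u / v})"
proof (rule smalloI_tendsto)
  define A where "A t = prob {\<omega>\<in>space M. Z \<omega> > t}" for t
  have "v / w > 1" using w by simp
  with Z have "((\<lambda>u. A ((v / w) * u) / A u) \<longlongrightarrow> 0) at_top"
    unfolding rapidly_varying_tail_def A_def by blast
  then have "((\<lambda>u. A ((v / w) * (u * inverse v)) / A (u * inverse v)) \<longlongrightarrow> 0) at_top"
    by (rule filterlim_compose) (use w in \<open>simp add: filterlim_mult_const_at_top\<close>)
  moreover have "(v / w) * (u * inverse v) = u / w" "u * inverse v = u / v" for u
    using w by (simp_all add: field_simps)
  ultimately show "((\<lambda>u. prob {\<omega>\<in>space M. Z \<omega> > u / w} / prob {\<omega>\<in>space M. Z \<omega> > u / v}) \<longlongrightarrow> 0) at_top"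
    by (simp add: A_def)
  show "eventually (\<lambda>u. prob {\<omega>\<in>space M. Z \<omega> > u / v} \<noteq> 0) at_top"
    using Z by (simp add: rapidly_varying_tail_def less_imp_neq[symmetric])
qed

lemma (in prob_space) measurable_slowly_varying_tail_ratio:
  fixes Y Y' :: "'a \<Rightarrow> real" and L :: "real \<Rightarrow> real"
  assumes Y: "Y \<in> borel_measurable M" and Y': "Y' \<in> borel_measurable M"
    and pos: "\<And>t. prob {\<omega>\<in>space M. Y \<omega> > t} > 0" "\<And>t. prob {\<omega>\<in>space M. Y' \<omega> > t} > 0"
    and L: "slowly_varying L"
    and YL: "(\<lambda>u. prob {\<omega>\<in>space M. Y \<omega> > u}) \<sim>[at_top] (\<lambda>u. L u * prob {\<omega>\<in>space M. Y' \<omega> > u})"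
  obtains g where "g \<in> borel_measurable borel" "\<And>t. g t > 0" "slowly_varying g" "g \<sim>[at_top] L"
    "\<And>t. prob {\<omega>\<in>space M. Y \<omega> > t} = g t * prob {\<omega>\<in>space M. Y' \<omega> > t}"
proof
  define g where "g t = prob {\<omega>\<in>space M. Y \<omega> > t} / prob {\<omega>\<in>space M. Y' \<omega> > t}" for t
  show "g \<in> borel_measurable borel"
    unfolding g_def[abs_def] by (rule borel_measurable_divide[OF borel_measurable_tail[OF Y] borel_measurable_tail[OF Y']])
  show "g t > 0" "prob {\<omega>\<in>space M. Y \<omega> > t} = g t * prob {\<omega>\<in>space M. Y' \<omega> > t}" for t
    using pos[of t] by (simp_all add: g_def)
  have "g \<sim>[at_top] (\<lambda>u. L u * prob {\<omega>\<in>space M. Y' \<omega> > u} / prob {\<omega>\<in>space M. Y' \<omega> > u})"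
    unfolding g_def by (rule asymp_equiv_divide[OF YL asymp_equiv_refl])
  moreover have "(\<lambda>u. L u * prob {\<omega>\<in>space M. Y' \<omega> > u} / prob {\<omega>\<in>space M. Y' \<omega> > u}) = L"
    using pos(2) by (simp add: fun_eq_iff less_imp_neq[symmetric])
  ultimately show g_L: "g \<sim>[at_top] L" by simp
  show "slowly_varying g" by (rule slowly_varying_asymp_equiv[OF L g_L])
qed

section \<open>The uniform convergence theorem\<close>

lemma lborel_sets_intersect:
  fixes A B :: "real set"
  assumes [measurable]: "A \<in> sets lborel" "B \<in> sets lborel"
    and AB: "A \<union> B \<subseteq> {a..b}" and large: "ennreal (b - a) < emeasure lborel A + emeasure lborel B"
  shows "A \<inter> B \<noteq> {}"
proof
  assume "A \<inter> B = {}"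
  then have "emeasure lborel A + emeasure lborel B = emeasure lborel (A \<union> B)"
    using assms(1,2) by (intro plus_emeasure) auto
  also have "\<dots> \<le> emeasure lborel {a..b}"
    using AB by (intro emeasure_mono) auto
  also have "\<dots> \<le> ennreal (b - a)"
    by (simp add: emeasure_lborel_Icc_eq)
  finally show False using large by simp
qed

lemma lborel_sets_translate_intersect:
  fixes U V :: "real set"
  assumes Um: "U \<in> sets borel" and Vm: "V \<in> sets borel"
    and UV: "U \<subseteq> {0..2*T}" "V \<subseteq> {0..2*T}" and t: "t \<in> {0..T}"
    and U: "ennreal (3*T/2) < emeasure lborel U" and V: "ennreal (3*T/2) < emeasure lborel V"
  shows "\<exists>s\<in>U. s - t \<in> V"
proof -
  define W where "W = (+) (- t) -` V"
  have shift: "(+) (- t) \<in> borel_measurable borel" by simp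
  have Wm: "W \<in> sets borel"
    using measurable_sets[OF shift Vm] by (simp add: W_def)
  have "emeasure lborel W = emeasure (distr lborel borel ((+) (- t))) V"
    using shift Vm by (subst emeasure_distr) (simp_all add: W_def)
  with V have W: "ennreal (3*T/2) < emeasure lborel W"
    by (simp add: lborel_distr_plus)
  have "U \<inter> W \<noteq> {}"
  proof (rule lborel_sets_intersect)
    have "W \<subseteq> {0..3*T}"
    proof
      fix s assume "s \<in> W"
      then have "- t + s \<in> {0..2*T}"
        using UV(2) unfolding W_def by blast
      with t show "s \<in> {0..3*T}" by auto
    qed
    with UV(1) t show "U \<union> W \<subseteq> {0..3*T}" by auto
    have "ennreal (3*T) = ennreal (3*T/2) + ennreal (3*T/2)"
      using t by (simp add: ennreal_plus[symmetric])
    also have "\<dots> < emeasure lborel U + emeasure lborel W"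
      using U W by (rule add_strict_mono)
    finally show "ennreal (3*T - 0) < emeasure lborel U + emeasure lborel W" by simp
  qed (simp_all add: Um Wm)
  then show ?thesis by (auto simp: W_def)
qed

definition good_shifts :: "(real \<Rightarrow> real) \<Rightarrow> (nat \<Rightarrow> real) \<Rightarrow> real \<Rightarrow> real \<Rightarrow> nat \<Rightarrow> real set"
  where "good_shifts h x T \<epsilon> n = {s\<in>{0..T}. \<forall>m\<ge>n. \<bar>h (x m + s) - h (x m)\<bar> < \<epsilon>}"

lemma good_shifts_subset: "good_shifts h x T \<epsilon> n \<subseteq> {0..T}"
  by (auto simp: good_shifts_def)

lemma good_shifts_measurable:
  assumes [measurable]: "h \<in> borel_measurable borel"
  shows "good_shifts h x T \<epsilon> n \<in> sets borel"
proof -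
  have "{s\<in>space borel. s \<in> {0..T} \<and> (\<forall>m\<ge>n. \<bar>h (x m + s) - h (x m)\<bar> < \<epsilon>)} \<in> sets borel"
    by measurable
  then show ?thesis by (simp add: good_shifts_def)
qed

lemma eventually_emeasure_good_shifts_gt:
  fixes h :: "real \<Rightarrow> real" and x :: "nat \<Rightarrow> real"
  assumes h: "h \<in> borel_measurable borel"
    and conv: "\<And>t. ((\<lambda>y. h (y + t) - h y) \<longlongrightarrow> 0) at_top"
    and x: "filterlim x at_top sequentially" and "\<epsilon> > 0" and c: "0 \<le> c" "c < T"
  shows "eventually (\<lambda>n. ennreal c < emeasure lborel (good_shifts h x T \<epsilon> n)) sequentially"
proof -
  have "incseq (good_shifts h x T \<epsilon>)" by (auto simp: incseq_def good_shifts_def)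
  moreover have "(\<Union>n. good_shifts h x T \<epsilon> n) = {0..T}"
  proof (intro equalityI subsetI)
    fix s assume s: "s \<in> {0..T}"
    have "((\<lambda>m. h (x m + s) - h (x m)) \<longlonglongrightarrow> 0)"
      using filterlim_compose[OF conv[of s] x] by simp
    then have "eventually (\<lambda>m. \<bar>h (x m + s) - h (x m)\<bar> < \<epsilon>) sequentially"
      using \<open>\<epsilon> > 0\<close> by (intro order_tendstoD(2)[OF tendsto_rabs_zero])
    then show "s \<in> (\<Union>n. good_shifts h x T \<epsilon> n)"
      using s by (auto simp: good_shifts_def eventually_sequentially)
  qed (auto simp: good_shifts_def)
  moreover have "range (good_shifts h x T \<epsilon>) \<subseteq> sets lborel"
    using good_shifts_measurable[OF h] by auto
  ultimately have "(\<lambda>n. emeasure lborel (good_shifts h x T \<epsilon> n)) \<longlonglongrightarrow> ennreal T"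
    using c Lim_emeasure_incseq[of "good_shifts h x T \<epsilon>" lborel] by auto
  then show ?thesis
    using c by (intro order_tendstoD) (auto simp: ennreal_less_iff)
qed

text \<open>If the convergence were not uniform along \<open>x\<^sub>n \<rightarrow> \<infinity>\<close> at shifts \<open>t\<^sub>n \<in> [0, T]\<close>, the good shifts
  in \<open>[0, 2T]\<close> for \<open>x\<^sub>n\<close> and for \<open>x\<^sub>n + t\<^sub>n\<close> would eventually both have measure \<open>> 3T/2\<close>; a common
  point \<open>x\<^sub>n + s\<close> of the two shifted families is then close to both \<open>x\<^sub>n\<close> and \<open>x\<^sub>n + t\<^sub>n\<close>.\<close>
lemma uniform_convergence_additive:
  fixes h :: "real \<Rightarrow> real"
  assumes h: "h \<in> borel_measurable borel"
    and conv: "\<And>t. ((\<lambda>y. h (y + t) - h y) \<longlongrightarrow> 0) at_top" and T: "T > 0" and \<epsilon>: "\<epsilon> > 0"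
  shows "eventually (\<lambda>y. \<forall>t\<in>{0..T}. \<bar>h (y + t) - h y\<bar> < \<epsilon>) at_top"
proof (rule ccontr)
  assume "\<not> ?thesis"
  then have "\<forall>n::nat. \<exists>y. y \<ge> real n \<and> (\<exists>t\<in>{0..T}. \<bar>h (y + t) - h y\<bar> \<ge> \<epsilon>)"
    by (auto simp: eventually_at_top_linorder not_less)
  then obtain x t where x: "\<And>n. x n \<ge> real n" and t: "\<And>n. t n \<in> {0..T}"
      and bad: "\<And>n. \<bar>h (x n + t n) - h (x n)\<bar> \<ge> \<epsilon>"
    by metis
  define xt where "xt n = x n + t n" for n
  have x_lim: "filterlim x at_top sequentially"
    by (rule filterlim_at_top_mono[OF filterlim_real_sequentially]) (use x in auto)
  have xt_lim: "filterlim xt at_top sequentially"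
    by (rule filterlim_at_top_mono[OF filterlim_real_sequentially])
       (use x t in \<open>fastforce simp: xt_def intro!: always_eventually add_increasing2\<close>)
  define U where "U = good_shifts h x (2*T) (\<epsilon>/2)"
  define V where "V = good_shifts h xt (2*T) (\<epsilon>/2)"
  have "eventually (\<lambda>n. ennreal (3*T/2) < emeasure lborel (U n)) sequentially"
    unfolding U_def using \<epsilon> T by (intro eventually_emeasure_good_shifts_gt[OF h conv x_lim]) auto
  moreover have "eventually (\<lambda>n. ennreal (3*T/2) < emeasure lborel (V n)) sequentially"
    unfolding V_def using \<epsilon> T by (intro eventually_emeasure_good_shifts_gt[OF h conv xt_lim]) auto
  ultimately have "eventually (\<lambda>n. ennreal (3*T/2) < emeasure lborel (U n) \<and>
      ennreal (3*T/2) < emeasure lborel (V n)) sequentially"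
    by (rule eventually_conj)
  then obtain n where U: "ennreal (3*T/2) < emeasure lborel (U n)"
    and V: "ennreal (3*T/2) < emeasure lborel (V n)"
    unfolding eventually_sequentially by blast
  obtain s where sU: "s \<in> U n" and sV: "s - t n \<in> V n"
    using lborel_sets_translate_intersect[OF _ _ _ _ t U V] good_shifts_measurable[OF h]
      good_shifts_subset unfolding U_def V_def by blast
  from sU have near_x: "\<bar>h (x n + s) - h (x n)\<bar> < \<epsilon>/2"
    unfolding U_def good_shifts_def by blast
  from sV have "\<bar>h (xt n + (s - t n)) - h (xt n)\<bar> < \<epsilon>/2"
    unfolding V_def good_shifts_def by blast
  then have near_xt: "\<bar>h (x n + s) - h (x n + t n)\<bar> < \<epsilon>/2"
    by (simp add: xt_def)
  from near_x near_xt bad[of n] show False by linarith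
qed

lemma slowly_varying_ln_exp_shift:
  fixes g :: "real \<Rightarrow> real"
  assumes g_pos: "\<And>t. g t > 0" and sv: "slowly_varying g"
  shows "((\<lambda>y. ln (g (exp (y + t))) - ln (g (exp y))) \<longlongrightarrow> 0) at_top"
proof -
  have "((\<lambda>y. g (exp y * exp t) / g (exp y)) \<longlongrightarrow> 1) at_top"
    using filterlim_compose[OF sv[unfolded slowly_varying_def, rule_format, of "exp t"] exp_at_top]
    by simp
  then have "((\<lambda>y. ln (g (exp y * exp t) / g (exp y))) \<longlongrightarrow> ln 1) at_top"
    by (rule tendsto_ln) simp
  moreover have "ln (g (exp y * exp t) / g (exp y)) = ln (g (exp (y + t))) - ln (g (exp y))" for y
    using g_pos[of "exp y * exp t"] g_pos[of "exp y"] by (simp add: ln_div exp_add)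
  ultimately show ?thesis by simp
qed

lemma slowly_varying_uniform:
  fixes g :: "real \<Rightarrow> real"
  assumes g: "g \<in> borel_measurable borel" and g_pos: "\<And>t. g t > 0" and sv: "slowly_varying g"
    and w: "0 < w" and \<epsilon>: "\<epsilon> > 0"
  shows "eventually (\<lambda>u. \<forall>s\<in>{w..1}. (1 - \<epsilon>) * g u \<le> g (u / s) \<and> g (u / s) \<le> (1 + \<epsilon>) * g u) at_top"
proof -
  define h where "h y = ln (g (exp y))" for y
  have h: "h \<in> borel_measurable borel" unfolding h_def using g by measurable
  have conv: "((\<lambda>y. h (y + t) - h y) \<longlongrightarrow> 0) at_top" for t
    unfolding h_def by (rule slowly_varying_ln_exp_shift[OF g_pos sv])
  define T where "T = \<bar>ln w\<bar> + 1"
  have "eventually (\<lambda>y. \<forall>t\<in>{0..T}. \<bar>h (y + t) - h y\<bar> < ln (1 + \<epsilon>)) at_top"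
    using \<epsilon> by (intro uniform_convergence_additive[OF h conv]) (simp_all add: T_def)
  then have "eventually (\<lambda>u. \<forall>t\<in>{0..T}. \<bar>h (ln u + t) - h (ln u)\<bar> < ln (1 + \<epsilon>)) at_top"
    by (rule eventually_compose_filterlim[OF _ ln_at_top])
  then show ?thesis
    using eventually_gt_at_top[of 0]
  proof eventually_elim
    case (elim u)
    show ?case
    proof
      fix s assume s: "s \<in> {w..1}"
      with w have "ln w \<le> ln s" "ln s \<le> 0" by auto
      then have "- ln s \<in> {0..T}" by (auto simp: T_def)
      moreover have "h (ln u + - ln s) = ln (g (u / s))" "h (ln u) = ln (g u)"
        using elim s w by (simp_all add: h_def exp_diff)
      ultimately have "\<bar>ln (g (u / s)) - ln (g u)\<bar> < ln (1 + \<epsilon>)"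
        using elim by fastforce
      then have "ln (g (u / s)) < ln ((1 + \<epsilon>) * g u)" "ln (g u / (1 + \<epsilon>)) < ln (g (u / s))"
        using g_pos[of u] \<epsilon> by (simp_all add: ln_mult ln_div)
      then have "g (u / s) < (1 + \<epsilon>) * g u" "g u / (1 + \<epsilon>) < g (u / s)"
        using g_pos[of u] g_pos[of "u / s"] \<epsilon> by simp_all
      moreover have "(1 - \<epsilon>) * g u \<le> g u / (1 + \<epsilon>)"
        using g_pos[of u] \<epsilon> by (simp add: field_simps power2_eq_square[symmetric])
      ultimately show "(1 - \<epsilon>) * g u \<le> g (u / s) \<and> g (u / s) \<le> (1 + \<epsilon>) * g u"
        by simp
    qed
  qed
qed

section \<open>Tails of products\<close>

lemma (in prob_space) prob_product_tail_restricted_ge: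
  fixes S Z :: "'a \<Rightarrow> real"
  assumes ind: "indep_var borel S borel Z" and v: "w \<le> v" "0 < v" and u: "0 \<le> u"
  shows "prob {\<omega>\<in>space M. S \<omega> > v} * prob {\<omega>\<in>space M. Z \<omega> > u / v}
    \<le> prob {\<omega>\<in>space M. S \<omega> * Z \<omega> > u \<and> S \<omega> > w}"
proof -
  have [measurable]: "S \<in> borel_measurable M" "Z \<in> borel_measurable M"
    using ind by (blast dest: indep_var_rv1 indep_var_rv2)+
  have "prob {\<omega>\<in>space M. S \<omega> > v} * prob {\<omega>\<in>space M. Z \<omega> > u / v}
      = \<P>(\<omega> in M. S \<omega> \<in> {v<..} \<and> Z \<omega> \<in> {u / v<..})"
    by (subst prob_indep_random_variable[OF ind]) auto
  also have "\<dots> \<le> prob {\<omega>\<in>space M. S \<omega> * Z \<omega> > u \<and> S \<omega> > w}"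
  proof (rule finite_measure_mono)
    have "u < S \<omega> * Z \<omega>" if "S \<omega> > v" "Z \<omega> > u / v" for \<omega>
    proof -
      have "v * (u / v) < S \<omega> * Z \<omega>"
        using that v u by (intro mult_strict_mono) auto
      with v show ?thesis by simp
    qed
    with v show "{\<omega> \<in> space M. S \<omega> \<in> {v<..} \<and> Z \<omega> \<in> {u / v<..}}
        \<subseteq> {\<omega>\<in>space M. S \<omega> * Z \<omega> > u \<and> S \<omega> > w}" by auto
  qed measurable
  finally show ?thesis .
qed

lemma (in prob_space) prob_product_tail_le:
  fixes S Z :: "'a \<Rightarrow> real"
  assumes [measurable]: "S \<in> borel_measurable M" "Z \<in> borel_measurable M"
    and S_nonneg: "AE \<omega> in M. S \<omega> \<ge> 0" and w: "0 < w" and u: "0 \<le> u"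
  shows "prob {\<omega>\<in>space M. S \<omega> * Z \<omega> > u}
    \<le> prob {\<omega>\<in>space M. S \<omega> * Z \<omega> > u \<and> S \<omega> > w} + prob {\<omega>\<in>space M. Z \<omega> > u / w}"
proof -
  have "Z \<omega> > u / w \<or> S \<omega> > w" if "0 \<le> S \<omega>" "S \<omega> * Z \<omega> > u" for \<omega>
  proof (rule disjCI)
    assume "\<not> S \<omega> > w"
    moreover have "Z \<omega> > 0" using that u by (smt (verit) mult_nonneg_nonpos)
    ultimately have "w * Z \<omega> > u" using that by (smt (verit) mult_right_mono)
    with w show "Z \<omega> > u / w" by (simp add: pos_divide_less_eq mult.commute)
  qed
  then have "prob {\<omega>\<in>space M. S \<omega> * Z \<omega> > u}
      \<le> prob ({\<omega>\<in>space M. S \<omega> * Z \<omega> > u \<and> S \<omega> > w} \<union> {\<omega>\<in>space M. Z \<omega> > u / w})"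
    by (intro finite_measure_mono_AE) (use S_nonneg in \<open>auto elim!: eventually_mono\<close>)
  also have "\<dots> \<le> prob {\<omega>\<in>space M. S \<omega> * Z \<omega> > u \<and> S \<omega> > w} + prob {\<omega>\<in>space M. Z \<omega> > u / w}"
    by (rule measure_Un_le) measurable
  finally show ?thesis .
qed

lemma (in prob_space) product_tail_asymp_equiv_restricted:
  fixes S Z :: "'a \<Rightarrow> real"
  assumes ind: "indep_var borel S borel Z" and S_nonneg: "AE \<omega> in M. S \<omega> \<ge> 0"
    and S_pos: "\<And>x. x < 1 \<Longrightarrow> prob {\<omega>\<in>space M. S \<omega> > x} > 0"
    and Z: "rapidly_varying_tail M Z" and w: "0 < w" "w < 1"
  shows "(\<lambda>u. prob {\<omega>\<in>space M. S \<omega> * Z \<omega> > u})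
    \<sim>[at_top] (\<lambda>u. prob {\<omega>\<in>space M. S \<omega> * Z \<omega> > u \<and> S \<omega> > w})"
proof -
  have [measurable]: "S \<in> borel_measurable M" "Z \<in> borel_measurable M"
    using ind by (blast dest: indep_var_rv1 indep_var_rv2)+
  define P where "P u = prob {\<omega>\<in>space M. S \<omega> * Z \<omega> > u \<and> S \<omega> > w}" for u
  define A where "A t = prob {\<omega>\<in>space M. Z \<omega> > t}" for t
  define v where "v = (1 + w) / 2"
  have v: "w < v" "v < 1" using w by (auto simp: v_def)
  define p where "p = prob {\<omega>\<in>space M. S \<omega> > v}"
  have p: "p > 0" using S_pos[OF v(2)] by (simp add: p_def)
  have "(\<lambda>u. A (u / w)) \<in> o[at_top](\<lambda>u. A (u / v))"
    unfolding A_def by (rule rapidly_varying_tail_smallo[OF Z w(1) v(1)])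
  moreover have "(\<lambda>u. A (u / v)) \<in> O[at_top](P)"
  proof (rule bigoI)
    show "eventually (\<lambda>u. norm (A (u / v)) \<le> inverse p * norm (P u)) at_top"
      using eventually_ge_at_top[of 0]
    proof eventually_elim
      case (elim u)
      have "p * A (u / v) \<le> P u"
        unfolding p_def A_def P_def using v w elim by (intro prob_product_tail_restricted_ge[OF ind]) auto
      with p show ?case by (simp add: A_def P_def field_simps)
    qed
  qed
  ultimately have "(\<lambda>u. A (u / w)) \<in> o[at_top](P)"
    by (rule landau_o.small_big_trans)
  then have "(\<lambda>u. P u + A (u / w)) \<sim>[at_top] P"
    by (simp add: asymp_equiv_add_right)
  moreover have "eventually (\<lambda>u. prob {\<omega>\<in>space M. S \<omega> * Z \<omega> > u} \<in> {P u..P u + A (u / w)}) at_top"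
    using eventually_ge_at_top[of 0]
  proof eventually_elim
    case (elim u)
    have "P u \<le> prob {\<omega>\<in>space M. S \<omega> * Z \<omega> > u}"
      unfolding P_def by (intro finite_measure_mono) auto
    moreover have "prob {\<omega>\<in>space M. S \<omega> * Z \<omega> > u} \<le> P u + A (u / w)"
      unfolding P_def A_def using w elim S_nonneg by (intro prob_product_tail_le) auto
    ultimately show ?case by simp
  qed
  ultimately have "(\<lambda>u. prob {\<omega>\<in>space M. S \<omega> * Z \<omega> > u}) \<sim>[at_top] P"
    by (rule asymp_equiv_sandwich_real[OF asymp_equiv_refl])
  then show ?thesis
    unfolding P_def[abs_def] .
qed

lemma (in prob_space) prob_restricted_product_tail_le:
  fixes S Z Z' :: "'a \<Rightarrow> real"
  assumes ind: "indep_var borel S borel Z" and ind': "indep_var borel S borel Z'"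
    and S_le_1: "AE \<omega> in M. S \<omega> \<le> 1" and w: "0 < w" and K: "K \<ge> 0"
    and tails: "\<And>s. w < s \<Longrightarrow> s \<le> 1 \<Longrightarrow>
      prob {\<omega>\<in>space M. Z \<omega> > u / s} \<le> K * prob {\<omega>\<in>space M. Z' \<omega> > u / s}"
  shows "prob {\<omega>\<in>space M. S \<omega> * Z \<omega> > u \<and> S \<omega> > w}
    \<le> K * prob {\<omega>\<in>space M. S \<omega> * Z' \<omega> > u \<and> S \<omega> > w}"
proof -
  have [measurable]: "S \<in> borel_measurable M" "Z \<in> borel_measurable M" "Z' \<in> borel_measurable M"
    using ind ind' by (blast dest: indep_var_rv1 indep_var_rv2)+
  define C where "C = {p \<in> space (borel \<Otimes>\<^sub>M borel). w < fst p \<and> fst p \<le> (1::real) \<and> fst p * snd p > (u::real)}"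
  have C: "C \<in> sets (borel \<Otimes>\<^sub>M borel)" unfolding C_def by measurable
  have sections: "Pair s -` C = (if w < s \<and> s \<le> 1 then {z. z > u / s} else {})" for s
    using w by (auto simp: C_def space_pair_measure pos_divide_less_eq mult.commute)
  have restrict: "prob {\<omega>\<in>space M. S \<omega> * X \<omega> > u \<and> S \<omega> > w} = prob {\<omega>\<in>space M. (S \<omega>, X \<omega>) \<in> C}"
    if "X \<in> borel_measurable M" for X
  proof -
    note [measurable] = that
    show ?thesis unfolding C_def
      by (rule measure_eq_AE) (use S_le_1 in \<open>auto simp: space_pair_measure elim!: eventually_mono\<close>)
  qed
  show ?thesis
    unfolding restrict[of Z, OF \<open>Z \<in> borel_measurable M\<close>] restrict[of Z', OF \<open>Z' \<in> borel_measurable M\<close>]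
    by (rule prob_indep_pair_le_by_sections[OF ind ind' C K]) (use tails in \<open>simp add: sections\<close>)
qed

lemma (in prob_space) restricted_product_tail_asymp_equiv:
  fixes S Y Y' :: "'a \<Rightarrow> real" and g :: "real \<Rightarrow> real"
  assumes ind: "indep_var borel S borel Y" and ind': "indep_var borel S borel Y'"
    and S_le_1: "AE \<omega> in M. S \<omega> \<le> 1" and w: "0 < w"
    and g: "g \<in> borel_measurable borel" "\<And>t. g t > 0" "slowly_varying g"
    and tails: "\<And>t. prob {\<omega>\<in>space M. Y \<omega> > t} = g t * prob {\<omega>\<in>space M. Y' \<omega> > t}"
  shows "(\<lambda>u. prob {\<omega>\<in>space M. S \<omega> * Y \<omega> > u \<and> S \<omega> > w})
    \<sim>[at_top] (\<lambda>u. g u * prob {\<omega>\<in>space M. S \<omega> * Y' \<omega> > u \<and> S \<omega> > w})"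
proof (rule asymp_equiv_relative_bounds)
  fix \<epsilon> :: real assume \<epsilon>: "0 < \<epsilon>" "\<epsilon> < 1"
  define P where "P X u = prob {\<omega>\<in>space M. S \<omega> * X \<omega> > u \<and> S \<omega> > w}" for X u
  have "eventually (\<lambda>u. (1 - \<epsilon>) * (g u * P Y' u) \<le> P Y u \<and> P Y u \<le> (1 + \<epsilon>) * (g u * P Y' u)) at_top"
    using slowly_varying_uniform[OF g w \<epsilon>(1)]
  proof eventually_elim
    case (elim u)
    have "P Y u \<le> ((1 + \<epsilon>) * g u) * P Y' u"
      unfolding P_def
    proof (rule prob_restricted_product_tail_le[OF ind ind' S_le_1 w])
      show "0 \<le> (1 + \<epsilon>) * g u" using g(2)[of u] \<epsilon> by simp
      fix s assume "w < s" "s \<le> 1"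
      with elim show "prob {\<omega>\<in>space M. Y \<omega> > u / s} \<le> (1 + \<epsilon>) * g u * prob {\<omega>\<in>space M. Y' \<omega> > u / s}"
        by (simp add: tails mult_right_mono)
    qed
    moreover have "P Y' u \<le> inverse ((1 - \<epsilon>) * g u) * P Y u"
      unfolding P_def
    proof (rule prob_restricted_product_tail_le[OF ind' ind S_le_1 w])
      show "0 \<le> inverse ((1 - \<epsilon>) * g u)" using g(2)[of u] \<epsilon> by simp
      fix s assume "w < s" "s \<le> 1"
      with elim have "(1 - \<epsilon>) * g u * prob {\<omega>\<in>space M. Y' \<omega> > u / s} \<le> prob {\<omega>\<in>space M. Y \<omega> > u / s}"
        by (simp add: tails mult_right_mono)
      with g(2)[of u] \<epsilon>
      show "prob {\<omega>\<in>space M. Y' \<omega> > u / s} \<le> inverse ((1 - \<epsilon>) * g u) * prob {\<omega>\<in>space M. Y \<omega> > u / s}"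
        by (simp add: field_simps)
    qed
    ultimately show ?case using g(2)[of u] \<epsilon> by (simp add: field_simps)
  qed
  then show "eventually (\<lambda>u. (1 - \<epsilon>) * (g u * prob {\<omega>\<in>space M. S \<omega> * Y' \<omega> > u \<and> S \<omega> > w})
      \<le> prob {\<omega>\<in>space M. S \<omega> * Y \<omega> > u \<and> S \<omega> > w} \<and>
      prob {\<omega>\<in>space M. S \<omega> * Y \<omega> > u \<and> S \<omega> > w}
      \<le> (1 + \<epsilon>) * (g u * prob {\<omega>\<in>space M. S \<omega> * Y' \<omega> > u \<and> S \<omega> > w})) at_top"
    by (simp add: P_def)
qed

theorem lemma4p1:
  fixes M :: "'a measure" and S Y Ystar :: "'a \<Rightarrow> real" and L :: "real \<Rightarrow> real"
  assumes "prob_space M"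
    and "S \<in> borel_measurable M" and "Y \<in> borel_measurable M" and "Ystar \<in> borel_measurable M"
    and "prob_space.indep_vars M (\<lambda>_. borel) (\<lambda>i. [S, Y, Ystar] ! i) {0, 1, 2::nat}"
    and "AE \<omega> in M. S \<omega> \<ge> 0"
    and "right_endpoint M S = 1"
    and "rapidly_varying_tail M Y"
    and "slowly_varying L"
    and "(\<lambda>u. measure M {\<omega>\<in>space M. Y \<omega> > u})
           \<sim>[at_top] (\<lambda>u. L u * measure M {\<omega>\<in>space M. Ystar \<omega> > u})"
    and "0 < w" and "w < 1"
  shows "((\<lambda>u. measure M {\<omega>\<in>space M. S \<omega> * Y \<omega> > u})
           \<sim>[at_top] (\<lambda>u. measure M {\<omega>\<in>space M. S \<omega> * Y \<omega> > u \<and> S \<omega> > w})) \<and>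
         ((\<lambda>u. measure M {\<omega>\<in>space M. S \<omega> * Y \<omega> > u \<and> S \<omega> > w})
           \<sim>[at_top] (\<lambda>u. L u * measure M {\<omega>\<in>space M. S \<omega> * Ystar \<omega> > u}))"
proof -
  interpret prob_space M by fact
  have ind_Y: "indep_var borel S borel Y" and ind_Ystar: "indep_var borel S borel Ystar"
    using indep_var_from_indep_vars[OF assms(5), of 0 1] indep_var_from_indep_vars[OF assms(5), of 0 2]
    by simp_all
  have S_le_1: "AE \<omega> in M. S \<omega> \<le> 1"
    using AE_le_right_endpoint[OF assms(2), of 1] assms(7) by (simp add: one_ereal_def)
  have S_pos: "prob {\<omega>\<in>space M. S \<omega> > x} > 0" if "x < 1" for x
    using prob_gt_pos_below_right_endpoint[OF assms(2), of x] assms(7) that by (simp add: one_ereal_def)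
  have Ystar: "rapidly_varying_tail M Ystar"
    by (rule rapidly_varying_tail_asymp_equiv[OF assms(4,8-10)])
  obtain g where g: "g \<in> borel_measurable borel" "\<And>t. g t > 0" "slowly_varying g" "g \<sim>[at_top] L"
    and tails: "\<And>t. prob {\<omega>\<in>space M. Y \<omega> > t} = g t * prob {\<omega>\<in>space M. Ystar \<omega> > t}"
    using measurable_slowly_varying_tail_ratio[OF assms(3,4) _ _ assms(9,10)] assms(8) Ystar
    unfolding rapidly_varying_tail_def by blast
  have "(\<lambda>u. prob {\<omega>\<in>space M. S \<omega> * Y \<omega> > u \<and> S \<omega> > w})
      \<sim>[at_top] (\<lambda>u. g u * prob {\<omega>\<in>space M. S \<omega> * Ystar \<omega> > u \<and> S \<omega> > w})"
    by (rule restricted_product_tail_asymp_equiv[OF ind_Y ind_Ystar S_le_1 assms(11) g(1-3) tails])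
  also have "\<dots> \<sim>[at_top] (\<lambda>u. L u * prob {\<omega>\<in>space M. S \<omega> * Ystar \<omega> > u})"
    by (rule asymp_equiv_mult[OF g(4) asymp_equiv_symI])
       (rule product_tail_asymp_equiv_restricted[OF ind_Ystar assms(6) S_pos Ystar assms(11,12)])
  finally show ?thesis
    using product_tail_asymp_equiv_restricted[OF ind_Y assms(6) S_pos assms(8,11,12)] by simp
qed

end
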